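(* In the multidimensional knapsack problem, let $x^*$ be a basic optimal solution of the LP relaxation with value $V^*=\sum_iv_ix_i^*$, and let $q_{\max}:=\max_{i,j}w_{ij}/B_j$, assumed positive. If $k$ is an item with $0<x_k^*<1$, then $v_k\le q_{\max}V^*$.
   Context: Multidimensional knapsack: a finite set of items $i$, each with value $v_i\ge0$ and weight vector $(w_{i1},\dots,w_{im})\in\mathbb{R}_+^m$, and capacities $B_1,\dots,B_m>0$. The LP relaxation maximizes $\sum_iv_ix_i$ subject to $0\le x_i\le1$ for all $i$ and $\sum_iw_{ij}x_i\le B_j$ for all $j$. *)

theory Defs
  imports Complex_Main
begin

text \<open>Solutions of the LP relaxation are
functions x :: 'i \<Rightarrow> real; only their values on I matter.\<close>

definition lp_feasible ::
  "'i set \<Rightarrow> 'j set \<Rightarrow> ('i \<Rightarrow> 'j \<Rightarrow> real) \<Rightarrow> ('j \<Rightarrow> real) \<Rightarrow> ('i \<Rightarrow> real) \<Rightarrow> bool" where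
  "lp_feasible I J w B x \<longleftrightarrow>
     (\<forall>i\<in>I. 0 \<le> x i \<and> x i \<le> 1) \<and> (\<forall>j\<in>J. (\<Sum>i\<in>I. w i j * x i) \<le> B j)"

definition lp_optimal ::
  "'i set \<Rightarrow> 'j set \<Rightarrow> ('i \<Rightarrow> real) \<Rightarrow> ('i \<Rightarrow> 'j \<Rightarrow> real) \<Rightarrow> ('j \<Rightarrow> real) \<Rightarrow> ('i \<Rightarrow> real) \<Rightarrow> bool" where
  "lp_optimal I J v w B x \<longleftrightarrow> lp_feasible I J w B x \<and>
     (\<forall>y. lp_feasible I J w B y \<longrightarrow> (\<Sum>i\<in>I. v i * y i) \<le> (\<Sum>i\<in>I. v i * x i))"

text \<open>Basic solution = vertex (extreme point) of the feasible polytope,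
with coordinates restricted to I.\<close>
definition lp_basic ::
  "'i set \<Rightarrow> 'j set \<Rightarrow> ('i \<Rightarrow> 'j \<Rightarrow> real) \<Rightarrow> ('j \<Rightarrow> real) \<Rightarrow> ('i \<Rightarrow> real) \<Rightarrow> bool" where
  "lp_basic I J w B x \<longleftrightarrow> lp_feasible I J w B x \<and>
     (\<forall>y z t. lp_feasible I J w B y \<and> lp_feasible I J w B z \<and> 0 < t \<and> t < 1 \<and>
        (\<forall>i\<in>I. x i = t * y i + (1 - t) * z i) \<longrightarrow> (\<forall>i\<in>I. y i = x i \<and> z i = x i))"

end

theory Submission
  imports Defs
begin

text \<open>Scaling an LP solution \<open>x\<close> by \<open>1 - e q\<close> frees capacity \<open>e q B\<^sub>j\<close> in every
dimension \<open>j\<close>, which suffices to raise item \<open>k\<close> by \<open>e\<close> when \<open>w\<^sub>k\<^sub>j \<le> q B\<^sub>j\<close>.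
If \<open>x\<close> is optimal with value \<open>V\<close>, the new solution has value \<open>(1 - e q) V + e v\<^sub>k \<le> V\<close>,
i.e. \<open>v\<^sub>k \<le> q V\<close>.\<close>

lemma sum_scale_plus_point:
  fixes f x :: "'i \<Rightarrow> real"
  assumes "finite I" "k \<in> I"
  shows "(\<Sum>i\<in>I. f i * (c * x i + (if i = k then e else 0)))
           = c * (\<Sum>i\<in>I. f i * x i) + e * f k"
proof -
  have "(\<Sum>i\<in>I. f i * (c * x i + (if i = k then e else 0)))
          = (\<Sum>i\<in>I. c * (f i * x i) + (if i = k then e * f k else 0))"
    by (intro sum.cong) (auto simp: algebra_simps)
  also have "\<dots> = c * (\<Sum>i\<in>I. f i * x i) + e * f k"
    using assms by (simp add: sum.distrib sum_distrib_left)
  finally show ?thesis .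
qed

lemma lp_feasible_scale_plus_item:
  assumes feasible: "lp_feasible I J w B x" and "finite I" "k \<in> I"
    and "0 \<le> e" "e \<le> 1 - x k" "0 \<le> q" "e * q \<le> 1"
    and weight_bound: "\<forall>j\<in>J. w k j \<le> q * B j"
  shows "lp_feasible I J w B (\<lambda>i. (1 - e * q) * x i + (if i = k then e else 0))"
  unfolding lp_feasible_def
proof (intro conjI ballI)
  fix i assume "i \<in> I"
  then have "0 \<le> x i" "x i \<le> 1" using feasible unfolding lp_feasible_def by auto
  moreover have "0 \<le> e * q" using assms by simp
  ultimately have "0 \<le> (1 - e * q) * x i" "(1 - e * q) * x i \<le> x i" "(1 - e * q) * x i \<le> 1"
    using assms by (auto simp: mult_left_le_one_le mult_le_one)
  then show "0 \<le> (1 - e * q) * x i + (if i = k then e else 0)"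
    and "(1 - e * q) * x i + (if i = k then e else 0) \<le> 1"
    using assms by auto
next
  fix j assume "j \<in> J"
  have "(\<Sum>i\<in>I. w i j * ((1 - e * q) * x i + (if i = k then e else 0)))
          = (1 - e * q) * (\<Sum>i\<in>I. w i j * x i) + e * w k j"
    using assms(2,3) by (rule sum_scale_plus_point)
  also have "\<dots> \<le> (1 - e * q) * B j + e * (q * B j)"
    using feasible weight_bound \<open>j \<in> J\<close> assms(4,7)
    by (intro add_mono mult_left_mono) (auto simp: lp_feasible_def)
  also have "\<dots> = B j" by (simp add: algebra_simps)
  finally show "(\<Sum>i\<in>I. w i j * ((1 - e * q) * x i + (if i = k then e else 0))) \<le> B j" .
qed

lemma lp_optimal_item_value_le:
  assumes optimal: "lp_optimal I J v w B x" and "finite I" "k \<in> I" "x k < 1" "0 < q"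
    and weight_bound: "\<forall>j\<in>J. w k j \<le> q * B j"
  shows "v k \<le> q * (\<Sum>i\<in>I. v i * x i)"
proof -
  define e where "e = min (1 - x k) (1 / q)"
  have "0 < e" "e \<le> 1 - x k" "e * q \<le> 1"
    using assms by (auto simp: e_def min_def field_simps)
  then have "lp_feasible I J w B (\<lambda>i. (1 - e * q) * x i + (if i = k then e else 0))"
    using optimal assms weight_bound
    by (intro lp_feasible_scale_plus_item) (auto simp: lp_optimal_def)
  then have "(\<Sum>i\<in>I. v i * ((1 - e * q) * x i + (if i = k then e else 0)))
               \<le> (\<Sum>i\<in>I. v i * x i)"
    using optimal by (auto simp: lp_optimal_def)
  then have "(1 - e * q) * (\<Sum>i\<in>I. v i * x i) + e * v k \<le> (\<Sum>i\<in>I. v i * x i)"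
    by (simp only: sum_scale_plus_point[OF \<open>finite I\<close> \<open>k \<in> I\<close>])
  then have "e * v k \<le> e * (q * (\<Sum>i\<in>I. v i * x i))"
    by (simp add: algebra_simps)
  then show ?thesis using \<open>0 < e\<close> by simp
qed

lemma weight_le_Max_ratio:
  fixes w :: "'i \<Rightarrow> 'j \<Rightarrow> real"
  assumes "finite I" "finite J" "k \<in> I" "j \<in> J" "0 < B j"
  shows "w k j \<le> Max {w i j / B j | i j. i \<in> I \<and> j \<in> J} * B j"
proof -
  have "{w i j / B j | i j. i \<in> I \<and> j \<in> J} = (\<lambda>(i, j). w i j / B j) ` (I \<times> J)"
    by auto
  then have "w k j / B j \<le> Max {w i j / B j | i j. i \<in> I \<and> j \<in> J}"
    using assms by (intro Max_ge) auto
  then show ?thesis using \<open>0 < B j\<close> by (simp add: divide_le_eq)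
qed

theorem lemma5:
  fixes I :: "'i set" and J :: "'j set"
    and v :: "'i \<Rightarrow> real" and w :: "'i \<Rightarrow> 'j \<Rightarrow> real" and B :: "'j \<Rightarrow> real"
    and x :: "'i \<Rightarrow> real" and k :: 'i
  assumes "finite I" and "finite J" and "I \<noteq> {}" and "J \<noteq> {}"
    and "\<forall>i\<in>I. v i \<ge> 0"
    and "\<forall>i\<in>I. \<forall>j\<in>J. w i j \<ge> 0"
    and "\<forall>j\<in>J. B j > 0"
    and "lp_basic I J w B x" and "lp_optimal I J v w B x"
    and "Max {w i j / B j | i j. i \<in> I \<and> j \<in> J} > 0"
    and "k \<in> I" and "0 < x k" and "x k < 1"
  shows "v k \<le> Max {w i j / B j | i j. i \<in> I \<and> j \<in> J} * (\<Sum>i\<in>I. v i * x i)"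
proof (rule lp_optimal_item_value_le)
  show "\<forall>j\<in>J. w k j \<le> Max {w i j / B j | i j. i \<in> I \<and> j \<in> J} * B j"
    using assms(1,2,7,11) by (simp add: weight_le_Max_ratio)
qed (fact assms)+

end
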